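(* For every $n\ge2$, $|QB(n)|\le\lfloor\log_2 n\rfloor$.
   Context: Bifurcating trees: rooted trees in which every internal node has exactly two children; $\mathcal{T}_n$ is the set of isomorphism classes of bifurcating trees with $n$ leaves. The Colless index is $\mathcal{C}(T)=\sum_{v}|\kappa_T(v_1)-\kappa_T(v_2)|$, summed over internal nodes $v$ with children $v_1,v_2$, where $\kappa_T(w)$ is the number of leaves descending from $w$; $c_n=\min\{\mathcal{C}(T):T\in\mathcal{T}_n\}$. For $n\ge2$, $QB(n)=\{(n_a,n_b)\in\mathbb{N}^2: n_a\ge n_b\ge1,\ n_a+n_b=n,\ c_{n_a}+c_{n_b}+n_a-n_b=c_n\}$. *)

theory Defs
  imports Complex_Main
begin

text \<open>Isomorphism classes are irrelevant for the minimum of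
the Colless index, since the index is invariant under swapping children.\<close>
datatype btree = Leaf | Node btree btree

fun leaves :: "btree \<Rightarrow> nat" where
  "leaves Leaf = 1"
| "leaves (Node l r) = leaves l + leaves r"

fun colless :: "btree \<Rightarrow> int" where
  "colless Leaf = 0"
| "colless (Node l r) = \<bar>int (leaves l) - int (leaves r)\<bar> + colless l + colless r"

definition min_colless :: "nat \<Rightarrow> int" where
  "min_colless n = (LEAST k. k \<ge> 0 \<and> (\<exists>t. leaves t = n \<and> colless t = k))"

definition QB :: "nat \<Rightarrow> (nat \<times> nat) set" where
  "QB n = {(na, nb). na \<ge> nb \<and> nb \<ge> 1 \<and> na + nb = n \<and>
            min_colless na + min_colless nb + int na - int nb = min_colless n}"

end

theory Submission
  imports Defs "HOL-Library.Discrete_Functions"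
begin

(* The minimal Colless index c_n is attained by the maximally balanced tree, so
   c_(2x) = 2 c_x and c_(2x+1) = c_x + c_(x+1) + 1.  The defect c_a + c_b + |a - b| - c_(a+b)
   of a split satisfies exact halving identities; they show that the defect is nonnegative
   (so the balanced tree is optimal) and describe QB(n) recursively through the differences
   a - b: those for 2m are 0 and doubles of those for m, and those for 2m + 1 are the numbers
   2j + 1 with j and j + 1 differences for m or m + 1.  By induction no closed interval
   [2^i, 2^(i+1)] contains two differences; since differences are at most n/2 and have the
   parity of n, there are at most floor(log_2 n) of them. *)

fun balanced_colless :: "nat \<Rightarrow> nat" where
  "balanced_colless n =
     (if n \<le> 1 then 0
      else balanced_colless (n div 2) + balanced_colless (n - n div 2) + n mod 2)"

declare balanced_colless.simps [simp del]

lemma balanced_colless_le_1 [simp]: "n \<le> 1 \<Longrightarrow> balanced_colless n = 0"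
  by (simp add: balanced_colless.simps)

lemma balanced_colless_double: "balanced_colless (2 * x) = 2 * balanced_colless x"
  by (cases "x = 0") (simp, subst balanced_colless.simps, simp)

lemma balanced_colless_odd:
  "1 \<le> x \<Longrightarrow> balanced_colless (2 * x + 1) = balanced_colless x + balanced_colless (x + 1) + 1"
  by (subst balanced_colless.simps) auto

definition colless_gap :: "nat \<Rightarrow> nat \<Rightarrow> int" where
  "colless_gap a b = int (balanced_colless a) + int (balanced_colless b) + \<bar>int a - int b\<bar>
     - int (balanced_colless (a + b))"

lemma colless_gap_commute: "colless_gap a b = colless_gap b a"
  unfolding colless_gap_def by (simp add: add.commute abs_minus_commute)

lemma colless_gap_0 [simp]: "colless_gap a 0 = int a"
  by (simp add: colless_gap_def)

lemma colless_gap_double: "colless_gap (2 * x) (2 * y) = 2 * colless_gap x y"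
proof -
  have "2 * x + 2 * y = 2 * (x + y)" by simp
  then show ?thesis
    unfolding colless_gap_def by (simp only: balanced_colless_double) (simp add: abs_if)
qed

lemma colless_gap_even_odd:
  assumes "1 \<le> y"
  shows "colless_gap (2 * x) (2 * y + 1) = colless_gap x y + colless_gap x (y + 1)"
proof -
  have "2 * x + (2 * y + 1) = 2 * (x + y) + 1" by simp
  then show ?thesis using assms
    unfolding colless_gap_def
    by (simp only: balanced_colless_double balanced_colless_odd) (simp add: algebra_simps abs_if)
qed

lemma colless_gap_odd_odd:
  assumes "1 \<le> x" "1 \<le> y"
  shows "colless_gap (2 * x + 1) (2 * y + 1)
    = colless_gap x (y + 1) + colless_gap (x + 1) y + (if x = y then 0 else 2)"
proof -
  have "2 * x + 1 + (2 * y + 1) = 2 * (x + y + 1)" by simp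
  then show ?thesis using assms
    unfolding colless_gap_def
    by (simp only: balanced_colless_double balanced_colless_odd) (simp add: algebra_simps abs_if)
qed

(* The identities above need x, y \<ge> 1 because c_1 = 0 breaks the odd recursion at 1 = 2 * 0 + 1;
   splits with a part of size 1 are handled separately. *)
lemma colless_gap_one:
  "1 \<le> a \<Longrightarrow> 0 \<le> colless_gap a 1 \<and> (colless_gap a 1 = 0 \<longleftrightarrow> a \<le> 2)"
proof (induction a rule: less_induct)
  case (less a)
  show ?case
  proof (cases "a \<le> 2")
    case True
    have "balanced_colless 2 = 0" "balanced_colless 3 = 1"
      by (simp_all add: balanced_colless.simps[of 2] balanced_colless.simps[of 3])
    then have "colless_gap 1 1 = 0" "colless_gap 2 1 = 0"
      by (simp_all add: colless_gap_def numeral_2_eq_2 numeral_3_eq_3)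
    moreover have "a = 1 \<or> a = 2" using True less.prems by auto
    ultimately show ?thesis by auto
  next
    case False
    define x where "x = a div 2"
    have x: "a = 2 * x \<or> a = 2 * x + 1" "1 \<le> x" "x < a"
      using False unfolding x_def by auto
    have "0 \<le> colless_gap x 1" using less.IH x by blast
    moreover have "colless_gap (2 * x) 1 = colless_gap x 1 + (int x - 1)"
      using balanced_colless_odd[of x] x(2) by (simp add: colless_gap_def balanced_colless_double)
    moreover have "colless_gap (2 * x + 1) 1 = colless_gap x 1 + int x + 2"
      using balanced_colless_odd[of x] balanced_colless_double[of "x + 1"] x(2)
      by (simp add: colless_gap_def)
    ultimately show ?thesis using x False by auto
  qed
qed

lemma colless_gap_nonneg: "0 \<le> colless_gap a b"
proof (induction "a + b" arbitrary: a b rule: less_induct)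
  case less
  consider "a = 0 \<or> b = 0" | "1 \<le> a" "b = 1" | "a = 1" "1 \<le> b" | "2 \<le> a" "2 \<le> b"
    by linarith
  then show ?case
  proof cases
    case 1
    then show ?thesis by (auto simp: colless_gap_commute[of 0])
  next
    case 2
    then show ?thesis using colless_gap_one[of a] by simp
  next
    case 3
    then show ?thesis using colless_gap_one[of b] colless_gap_commute[of a b] by auto
  next
    case 4
    define x y where "x = a div 2" and "y = b div 2"
    have xy: "1 \<le> x" "1 \<le> y" "x < a" "y < b" using 4 unfolding x_def y_def by auto
    have parity: "a = 2 * x \<or> a = 2 * x + 1" "b = 2 * y \<or> b = 2 * y + 1"
      unfolding x_def y_def by auto
    have IH: "0 \<le> colless_gap x' y'" if "x' + y' < a + b" for x' y'
      using less that by blast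
    consider "a = 2 * x" "b = 2 * y" | "a = 2 * x" "b = 2 * y + 1"
      | "a = 2 * x + 1" "b = 2 * y" | "a = 2 * x + 1" "b = 2 * y + 1"
      using parity by blast
    then show ?thesis
    proof cases
      case 1
      then show ?thesis using IH[of x y] xy colless_gap_double[of x y] by simp
    next
      case 2
      then show ?thesis
        using IH[of x y] IH[of x "y + 1"] xy colless_gap_even_odd[OF xy(2), of x] by simp
    next
      case 3
      then show ?thesis using IH[of y x] IH[of y "x + 1"] xy colless_gap_even_odd[OF xy(1), of y]
        colless_gap_commute[of a b] by simp
    next
      case 4
      then show ?thesis using IH[of x "y + 1"] IH[of "x + 1" y] xy colless_gap_odd_odd[OF xy(1,2)]
        by simp
    qed
  qed
qed

lemma balanced_colless_le_colless: "balanced_colless (leaves t) \<le> colless t"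
proof (induction t)
  case (Node l r)
  then show ?case using colless_gap_nonneg[of "leaves l" "leaves r"]
    by (simp add: colless_gap_def)
qed simp

lemma ex_tree_balanced_colless: "1 \<le> n \<Longrightarrow> \<exists>t. leaves t = n \<and> colless t = balanced_colless n"
proof (induction n rule: less_induct)
  case (less n)
  show ?case
  proof (cases "n = 1")
    case True
    then show ?thesis by (intro exI[of _ Leaf]) simp
  next
    case False
    then have "1 \<le> n div 2" "n div 2 < n" "1 \<le> n - n div 2" "n - n div 2 < n"
      using less.prems by auto
    then obtain l r where l: "leaves l = n - n div 2" "colless l = balanced_colless (n - n div 2)"
      and r: "leaves r = n div 2" "colless r = balanced_colless (n div 2)"
      using less.IH[of "n - n div 2"] less.IH[of "n div 2"] by auto
    have rec: "balanced_colless n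
        = balanced_colless (n div 2) + balanced_colless (n - n div 2) + n mod 2"
      using False less.prems by (subst balanced_colless.simps) simp
    have diff: "\<bar>int (n - n div 2) - int (n div 2)\<bar> = int (n mod 2)"
      by (simp add: of_nat_diff) presburger
    have "colless (Node l r) = balanced_colless n"
      unfolding colless.simps l r diff rec by simp
    moreover have "leaves (Node l r) = n" using l r by simp
    ultimately show ?thesis by blast
  qed
qed

lemma min_colless_eq_balanced_colless:
  assumes "1 \<le> n"
  shows "min_colless n = balanced_colless n"
  unfolding min_colless_def
proof (rule Least_equality)
  show "0 \<le> int (balanced_colless n) \<and> (\<exists>t. leaves t = n \<and> colless t = balanced_colless n)"
    using ex_tree_balanced_colless[OF assms] by simp
qed (use balanced_colless_le_colless in auto)

lemma QB_eq_colless_gap: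
  "QB n = {(a, b). b \<le> a \<and> 1 \<le> b \<and> a + b = n \<and> colless_gap a b = 0}"
proof -
  have "min_colless a + min_colless b + int a - int b = min_colless (a + b)
      \<longleftrightarrow> colless_gap a b = 0" if "b \<le> a" "1 \<le> b" for a b
    using that by (simp add: min_colless_eq_balanced_colless colless_gap_def algebra_simps)
  then show ?thesis unfolding QB_def by auto
qed

definition QB_diffs :: "nat \<Rightarrow> nat set" where
  "QB_diffs n = (\<lambda>(a, b). a - b) ` QB n"

lemma card_QB_diffs: "card (QB_diffs n) = card (QB n)"
proof -
  have "inj_on (\<lambda>(a, b). a - b) (QB n)"
    by (rule inj_onI) (auto simp: QB_eq_colless_gap)
  then show ?thesis unfolding QB_diffs_def by (rule card_image)
qed

lemma QB_diffs_iff: "d \<in> QB_diffs n \<longleftrightarrow> (\<exists>b \<ge> 1. n = d + 2 * b \<and> colless_gap (b + d) b = 0)"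
proof
  assume "d \<in> QB_diffs n"
  then obtain a b where "b \<le> a" "1 \<le> b" "a + b = n" "colless_gap a b = 0" "d = a - b"
    unfolding QB_diffs_def QB_eq_colless_gap by auto
  then show "\<exists>b \<ge> 1. n = d + 2 * b \<and> colless_gap (b + d) b = 0"
    by (intro exI[of _ b]) auto
next
  assume "\<exists>b \<ge> 1. n = d + 2 * b \<and> colless_gap (b + d) b = 0"
  then obtain b where "1 \<le> b" "n = d + 2 * b" "colless_gap (b + d) b = 0" by blast
  then show "d \<in> QB_diffs n"
    unfolding QB_diffs_def QB_eq_colless_gap by (intro image_eqI[of _ _ "(b + d, b)"]) auto
qed

lemma QB_diffs_parity: "d \<in> QB_diffs n \<Longrightarrow> even d \<longleftrightarrow> even n"
  by (auto simp: QB_diffs_iff)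

lemma QB_diffs_small: "n \<le> 3 \<Longrightarrow> QB_diffs n \<subseteq> {n - 2}"
  by (auto simp: QB_diffs_iff) arith

lemma QB_diffs_double:
  assumes "d \<in> QB_diffs (2 * m)"
  shows "d = 0 \<or> (\<exists>e \<in> QB_diffs m. d = 2 * e)"
proof -
  obtain b where b: "1 \<le> b" "2 * m = d + 2 * b" and gap: "colless_gap (b + d) b = 0"
    using assms by (auto simp: QB_diffs_iff)
  define e y where "e = d div 2" and "y = b div 2"
  have d: "d = 2 * e" using b unfolding e_def by presburger
  have "b = 2 * y \<or> b = 2 * y + 1" unfolding y_def by auto
  then consider "b = 2 * y" "1 \<le> y" | "b = 1" | "b = 2 * y + 1" "1 \<le> y"
    using b(1) by force
  then show ?thesis
  proof cases
    case 1
    then have "colless_gap (y + e) y = 0"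
      using gap colless_gap_double[of "y + e" y] by (simp add: d algebra_simps)
    then have "e \<in> QB_diffs m" using b 1 unfolding QB_diffs_iff d by auto
    then show ?thesis using d by blast
  next
    case 2
    then show ?thesis using gap colless_gap_one[of "1 + d"] d by auto
  next
    case 3
    have "colless_gap (2 * (y + e) + 1) (2 * y + 1) = 0" using gap 3 d by (simp add: algebra_simps)
    then have "e = 0"
      using colless_gap_odd_odd[of "y + e" y] 3 colless_gap_nonneg[of "y + e" "y + 1"]
        colless_gap_nonneg[of "y + e + 1" y] by (auto split: if_splits)
    then show ?thesis using d by simp
  qed
qed

lemma QB_diffs_odd:
  assumes "2 \<le> m" "d \<in> QB_diffs (2 * m + 1)"
  shows "\<exists>j. d = 2 * j + 1 \<and> {j, j + 1} \<subseteq> QB_diffs m \<union> QB_diffs (m + 1)"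
proof -
  obtain b where b: "1 \<le> b" "2 * m + 1 = d + 2 * b" and gap: "colless_gap (b + d) b = 0"
    using assms(2) by (auto simp: QB_diffs_iff)
  define j y where "j = d div 2" and "y = b div 2"
  have d: "d = 2 * j + 1" using b unfolding j_def by presburger
  have "b = 2 * y \<or> b = 2 * y + 1" unfolding y_def by auto
  then consider "b = 2 * y" "1 \<le> y" | "b = 1" | "b = 2 * y + 1" "1 \<le> y"
    using b(1) by force
  then show ?thesis
  proof cases
    case 1
    have "colless_gap (2 * y) (2 * (y + j) + 1) = 0"
      using gap 1 d colless_gap_commute by (simp add: algebra_simps)
    then have "colless_gap (y + j) y = 0" "colless_gap (y + (j + 1)) y = 0"
      using colless_gap_even_odd[of "y + j" y] 1 colless_gap_nonneg[of y "y + j"]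
        colless_gap_nonneg[of y "y + j + 1"] colless_gap_commute[of y]
      by (simp_all add: algebra_simps)
    then have "j \<in> QB_diffs m" "j + 1 \<in> QB_diffs (m + 1)"
      using b 1 d unfolding QB_diffs_iff by auto
    then show ?thesis using d by blast
  next
    case 2
    then show ?thesis using gap colless_gap_one[of "1 + d"] d assms(1) b by auto
  next
    case 3
    have "colless_gap (2 * (y + j + 1)) (2 * y + 1) = 0" using gap 3 d by (simp add: algebra_simps)
    then have gaps: "colless_gap (y + (j + 1)) y = 0" "colless_gap (y + 1 + j) (y + 1) = 0"
      using colless_gap_even_odd[of y "y + j + 1"] 3 colless_gap_nonneg[of "y + j + 1" y]
        colless_gap_nonneg[of "y + j + 1" "y + 1"] by (simp_all add: algebra_simps)
    have "m = (j + 1) + 2 * y" "m + 1 = j + 2 * (y + 1)" "1 \<le> y + 1" using b 3 d by simp_all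
    then have "j + 1 \<in> QB_diffs m" "j \<in> QB_diffs (m + 1)"
      unfolding QB_diffs_iff using gaps 3(2) by blast+
    then show ?thesis using d by blast
  qed
qed

lemma halving_induct [case_names small double odd]:
  fixes n :: nat
  assumes "\<And>n. n \<le> 3 \<Longrightarrow> P n"
    and "\<And>m. 2 \<le> m \<Longrightarrow> P m \<Longrightarrow> P (2 * m)"
    and "\<And>m. 2 \<le> m \<Longrightarrow> P m \<Longrightarrow> P (m + 1) \<Longrightarrow> P (2 * m + 1)"
  shows "P n"
proof (induction n rule: less_induct)
  case (less n)
  show ?case
  proof (cases "n \<le> 3")
    case False
    define m where "m = n div 2"
    have m: "2 \<le> m" "m < n" "m + 1 < n" using False unfolding m_def by auto
    have "n = 2 * m \<or> n = 2 * m + 1" unfolding m_def by auto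
    then show ?thesis using assms(2,3) less m by auto
  qed (rule assms(1))
qed

lemma QB_diffs_le_half: "d \<in> QB_diffs n \<Longrightarrow> 2 * d \<le> n"
proof (induction n arbitrary: d rule: halving_induct)
  case (small n)
  then show ?case by (auto simp: QB_diffs_iff)
next
  case (double m)
  then show ?case using QB_diffs_double by fastforce
next
  case (odd m)
  then obtain j where "d = 2 * j + 1" "j + 1 \<in> QB_diffs m \<union> QB_diffs (m + 1)"
    using QB_diffs_odd by blast
  then show ?case using odd.IH by fastforce
qed

(* The intervals are closed, so neighbouring ones share a power of two: this overlap is what
   lets the property pass from m and m + 1 to 2m + 1. *)
definition dyadically_sparse :: "nat set \<Rightarrow> bool" where
  "dyadically_sparse A \<longleftrightarrow> (\<forall>i. card (A \<inter> {2 ^ i..2 ^ (i + 1)}) \<le> 1)"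

lemma dyadically_sparseI:
  assumes "\<And>i d d'. d \<in> A \<Longrightarrow> d' \<in> A \<Longrightarrow> 2 ^ i \<le> d \<Longrightarrow> d \<le> 2 ^ (i + 1)
      \<Longrightarrow> 2 ^ i \<le> d' \<Longrightarrow> d' \<le> 2 ^ (i + 1) \<Longrightarrow> d = d'"
  shows "dyadically_sparse A"
  unfolding dyadically_sparse_def
proof
  fix i :: nat
  have "\<forall>d \<in> A \<inter> {2 ^ i..2 ^ (i + 1)}. \<forall>d' \<in> A \<inter> {2 ^ i..2 ^ (i + 1)}. d = d'"
  proof (intro ballI)
    fix d d' assume "d \<in> A \<inter> {2 ^ i..2 ^ (i + 1)}" "d' \<in> A \<inter> {2 ^ i..2 ^ (i + 1)}"
    then show "d = d'" by (intro assms[of d d' i]) auto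
  qed
  moreover have "finite (A \<inter> {2 ^ i..2 ^ (i + 1)})"
    by (intro finite_Int disjI2 finite_atLeastAtMost)
  ultimately show "card (A \<inter> {2 ^ i..2 ^ (i + 1)}) \<le> 1"
    by (simp only: One_nat_def card_le_Suc0_iff_eq)
qed

lemma dyadically_sparseD:
  assumes "dyadically_sparse A" "d \<in> A" "d' \<in> A" "2 ^ i \<le> d" "d \<le> 2 ^ (i + 1)"
    "2 ^ i \<le> d'" "d' \<le> 2 ^ (i + 1)"
  shows "d = d'"
proof -
  have "card (A \<inter> {2 ^ i..2 ^ (i + 1)}) \<le> 1"
    using assms(1) unfolding dyadically_sparse_def by blast
  moreover have "finite (A \<inter> {2 ^ i..2 ^ (i + 1)})"
    by (intro finite_Int disjI2 finite_atLeastAtMost)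
  ultimately have "\<forall>d \<in> A \<inter> {2 ^ i..2 ^ (i + 1)}. \<forall>d' \<in> A \<inter> {2 ^ i..2 ^ (i + 1)}. d = d'"
    by (simp only: One_nat_def card_le_Suc0_iff_eq)
  then show ?thesis using assms(2-) by (meson IntI atLeastAtMost_iff)
qed

lemma dyadically_sparse_double:
  assumes "dyadically_sparse A" "B \<subseteq> insert 0 ((*) 2 ` A)"
  shows "dyadically_sparse B"
proof (rule dyadically_sparseI)
  fix i d d' assume d: "d \<in> B" "2 ^ i \<le> d" "d \<le> 2 ^ (i + 1)"
    and d': "d' \<in> B" "2 ^ i \<le> d'" "d' \<le> 2 ^ (i + 1)"
  have "(0::nat) < 2 ^ i" by simp
  then have "d \<noteq> 0" "d' \<noteq> 0" using d(2) d'(2) by linarith+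
  then have "d \<in> (*) 2 ` A" "d' \<in> (*) 2 ` A" using d(1) d'(1) assms(2) by auto
  then obtain e e' where e: "d = 2 * e" "e \<in> A" and e': "d' = 2 * e'" "e' \<in> A"
    by blast
  show "d = d'"
  proof (cases i)
    case 0
    then have "d \<le> 2" "d' \<le> 2" using d(3) d'(3) by simp_all
    then show ?thesis using e(1) e'(1) \<open>d \<noteq> 0\<close> \<open>d' \<noteq> 0\<close> by presburger
  next
    case (Suc h)
    then have pw: "2 ^ i = 2 * 2 ^ h" "2 ^ (i + 1) = 2 * 2 ^ (h + 1)" by simp_all
    have "2 ^ h \<le> e" "e \<le> 2 ^ (h + 1)" "2 ^ h \<le> e'" "e' \<le> 2 ^ (h + 1)"
      using d(2,3) d'(2,3) e(1) e'(1) unfolding pw by linarith+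
    then show ?thesis using dyadically_sparseD[OF assms(1) e(2) e'(2)] e(1) e'(1) by blast
  qed
qed

lemma dyadically_sparse_odd:
  assumes "dyadically_sparse A" "dyadically_sparse A'"
    and "\<And>d. d \<in> B \<Longrightarrow> \<exists>j. d = 2 * j + 1 \<and> {j, j + 1} \<subseteq> A \<union> A'"
  shows "dyadically_sparse B"
proof -
  have no_pair: False if d: "d \<in> B" "2 ^ i \<le> d" and d': "d' \<in> B" "d' \<le> 2 ^ (i + 1)"
    and "d < d'" for i d d'
  proof -
    obtain j j' where j: "d = 2 * j + 1" "{j, j + 1} \<subseteq> A \<union> A'"
      and j': "d' = 2 * j' + 1" "{j', j' + 1} \<subseteq> A \<union> A'"
      using assms(3) d(1) d'(1) by meson
    show False
    proof (cases i)
      case 0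
      then have "d' \<le> 2" using d'(2) by simp
      then show False using j(1) j'(1) \<open>d < d'\<close> by presburger
    next
      case (Suc h)
      define blk where "blk = {2 ^ h..2 ^ (h + 1) :: nat}"
      have pw: "2 ^ i = 2 * 2 ^ h" "2 ^ (i + 1) = 2 * 2 ^ (h + 1)" "2 ^ (h + 1) = 2 * 2 ^ h"
        using Suc by simp_all
      have "2 ^ h \<le> j" "j' + 1 \<le> 2 ^ (h + 1)"
        using d(2) d'(2) j(1) j'(1) unfolding pw by linarith+
      then have "{j, j + 1, j' + 1} \<subseteq> (A \<union> A') \<inter> blk"
        using j(2) j'(2) \<open>d < d'\<close> j(1) j'(1) unfolding blk_def by auto
      then have "card {j, j + 1, j' + 1} \<le> card ((A \<union> A') \<inter> blk)"
        by (rule card_mono[rotated]) (simp add: blk_def)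
      also have "\<dots> \<le> card (A \<inter> blk) + card (A' \<inter> blk)"
        by (simp add: Int_Un_distrib2 card_Un_le)
      also have "\<dots> \<le> 1 + 1"
        using assms(1,2) unfolding dyadically_sparse_def blk_def by (intro add_mono) blast+
      finally show False using j(1) j'(1) \<open>d < d'\<close> by simp
    qed
  qed
  show ?thesis
  proof (rule dyadically_sparseI)
    fix i d d' assume "d \<in> B" "d' \<in> B" "2 ^ i \<le> d" "d \<le> 2 ^ (i + 1)"
      "2 ^ i \<le> d'" "d' \<le> 2 ^ (i + 1)"
    then show "d = d'" using no_pair[of d i d'] no_pair[of d' i d] by (meson linorder_neqE_nat)
  qed
qed

lemma dyadically_sparse_QB_diffs: "dyadically_sparse (QB_diffs n)"
proof (induction n rule: halving_induct)
  case (small n)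
  show ?case
  proof (rule dyadically_sparseI)
    fix i d d' assume "d \<in> QB_diffs n" "d' \<in> QB_diffs n"
    then show "d = d'" using QB_diffs_small[OF small] by blast
  qed
next
  case (double m)
  show ?case
    by (rule dyadically_sparse_double[OF double(2)]) (auto dest: QB_diffs_double)
next
  case (odd m)
  show ?case
    by (rule dyadically_sparse_odd[OF odd(2,3)]) (rule QB_diffs_odd[OF odd(1)])
qed

lemma card_le_floor_log_if_dyadically_sparse:
  assumes "dyadically_sparse A" "A \<subseteq> {..h}" "\<not> {0, 1} \<subseteq> A"
  shows "card A \<le> Suc (floor_log h)"
proof -
  have "inj_on floor_log A"
  proof (rule inj_onI)
    fix d d' assume d: "d \<in> A" and d': "d' \<in> A" and eq: "floor_log d = floor_log d'"
    show "d = d'"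
    proof (cases "d = 0 \<or> d' = 0")
      case True
      have "d < 2" "d' < 2" using floor_log_exp2_gt[of d] floor_log_exp2_gt[of d'] eq True by auto
      then show ?thesis using assms(3) d d' by (auto simp: numeral_2_eq_2 less_Suc_eq)
    next
      case False
      define i where "i = floor_log d"
      have "2 ^ i \<le> d" "2 ^ i \<le> d'"
        using floor_log_exp2_le[of d] floor_log_exp2_le[of d'] False eq unfolding i_def by auto
      moreover have "d \<le> 2 ^ (i + 1)" "d' \<le> 2 ^ (i + 1)"
        using floor_log_exp2_gt[of d] floor_log_exp2_gt[of d'] eq unfolding i_def by auto
      ultimately show ?thesis using dyadically_sparseD[OF assms(1) d d'] by blast
    qed
  qed
  moreover have "floor_log ` A \<subseteq> {..floor_log h}"
    using assms(2) floor_log_le_iff by auto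
  ultimately have "card A \<le> card {..floor_log h}"
    by (rule card_inj_on_le) simp
  then show ?thesis by simp
qed

theorem corollary6:
  fixes n :: nat
  assumes "n \<ge> 2"
  shows "int (card (QB n)) \<le> \<lfloor>log 2 (real n)\<rfloor>"
proof -
  have "QB_diffs n \<subseteq> {..n div 2}"
  proof
    fix d assume "d \<in> QB_diffs n"
    then have "2 * d \<le> n" by (rule QB_diffs_le_half)
    then show "d \<in> {..n div 2}" by simp
  qed
  moreover have "\<not> {0, 1} \<subseteq> QB_diffs n"
    using QB_diffs_parity[of 0 n] QB_diffs_parity[of 1 n] by auto
  ultimately have "card (QB_diffs n) \<le> Suc (floor_log (n div 2))"
    by (intro card_le_floor_log_if_dyadically_sparse dyadically_sparse_QB_diffs)
  also have "\<dots> = floor_log n" using floor_log_rec[OF assms] ..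
  finally have "card (QB n) \<le> floor_log n" by (simp add: card_QB_diffs)
  moreover have "floor_log n = nat \<lfloor>log 2 (real n)\<rfloor>"
    using assms floor_log_altdef[of n] by simp
  moreover have "0 \<le> \<lfloor>log 2 (real n)\<rfloor>" using assms by simp
  ultimately show ?thesis by linarith
qed

end
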